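(* Let $\overline{X}$ be a set, let $k$ divide $T$, and for each interval $j=1,\dots,T/k$ let $f_{j,1},\dots,f_{j,k}:\overline{X}\to[0,n]$ be functions fixed in advance. In the random-costs setting, in each interval $j$ a learner chooses $x_j\in\overline{X}$ (depending only on its own randomness and on previously observed functions), then an index $i_j$ is drawn uniformly from $\{1,\dots,k\}$ independently of everything else, and the learner observes and incurs $f^r_j:=f_{j,i_j}$ at $x_j$. In the corresponding average-costs setting the cost function of interval $j$ is $\overline{f}_j:=\frac1k\sum_{i=1}^k f_{j,i}$. If the learner's strategy has expected average regret at most $R(T)$ in the random-costs setting, i.e. $\frac1T\mathbb{E}\big[\sum_j f^r_j(x_j)-\min_{x\in\overline{X}}\sum_j f^r_j(x)\big]\le R(T)$, then the same strategy (played against the functions $\overline{f}_j$) satisfies $\frac1T\Big(\mathbb{E}\Big[\sum_{j=1}^{T/k}\overline{f}_j(x_j)\Big]-\min_{x\in\overline{X}}\sum_{j=1}^{T/k}\overline{f}_j(x)\Big)\le R(T)+\frac{n}{\sqrt{kT}}.$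
   Context: Sums over $j$ range over the $T/k$ intervals; expectations are over the random indices $i_j$ and the learner's randomness. *)

theory Defs
  imports "HOL-Probability.Probability"
begin

text \<open>Index sequences (i_1,...,i_m), each i_j in {0..<k} (0-based), m = T/k intervals.\<close>
definition idx_seqs :: "nat \<Rightarrow> nat \<Rightarrow> nat list set" where
  "idx_seqs k m = {is. length is = m \<and> set is \<subseteq> {0..<k}}"

text \<open>Expectation over i.i.d. uniform indices (uniform over all index sequences).\<close>
definition idx_avg :: "nat \<Rightarrow> nat \<Rightarrow> (nat list \<Rightarrow> real) \<Rightarrow> real" where
  "idx_avg k m g = (\<Sum>is\<in>idx_seqs k m. g is) / real (card (idx_seqs k m))"

definition fbar :: "nat \<Rightarrow> (nat \<Rightarrow> nat \<Rightarrow> 'a \<Rightarrow> real) \<Rightarrow> nat \<Rightarrow> 'a \<Rightarrow> real" where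
  "fbar k f j x = (\<Sum>i<k. f j i x) / real k"

end

theory Submission
  imports Defs
begin

text \<open>The index i_j is drawn after x_j is fixed, and x_j depends on the earlier indices only.
  Averaging over i_j alone therefore turns the realised cost f_{j,i_j}(x_j) into the average cost
  fbar_j(x_j), so the learner's expected cost is the same in both settings. On the comparator side,
  the expected minimum of the random total costs is at most the minimum of their expectations,
  which are the totals of the fbar_j. Hence the average-costs regret is at most R(T).\<close>

lemma idx_seqs_eq: "idx_seqs k m = {xs. set xs \<subseteq> {0..<k} \<and> length xs = m}"
  by (auto simp: idx_seqs_def)

lemma finite_idx_seqs: "finite (idx_seqs k m)"
  unfolding idx_seqs_eq by (rule finite_lists_length_eq) simp

lemma card_idx_seqs: "card (idx_seqs k m) = k ^ m"
  unfolding idx_seqs_eq by (subst card_lists_length_eq) simp_all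

lemma nth_idx_seqs_less: "is \<in> idx_seqs k m \<Longrightarrow> j < m \<Longrightarrow> is ! j < k"
  by (auto simp: idx_seqs_def dest: nth_mem)

lemma idx_seqs_Suc: "idx_seqs k (Suc m) = (\<lambda>(xs, i). xs @ [i]) ` (idx_seqs k m \<times> {..<k})"
proof
  show "idx_seqs k (Suc m) \<subseteq> (\<lambda>(xs, i). xs @ [i]) ` (idx_seqs k m \<times> {..<k})"
  proof
    fix ys assume ys: "ys \<in> idx_seqs k (Suc m)"
    then have "ys \<noteq> []"
      by (auto simp: idx_seqs_def)
    then have "ys = butlast ys @ [last ys]"
      by simp
    moreover have "(butlast ys, last ys) \<in> idx_seqs k m \<times> {..<k}"
      using ys last_in_set[OF \<open>ys \<noteq> []\<close>] by (auto simp: idx_seqs_def dest: in_set_butlastD)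
    ultimately show "ys \<in> (\<lambda>(xs, i). xs @ [i]) ` (idx_seqs k m \<times> {..<k})"
      by (metis (no_types, lifting) case_prod_conv image_eqI)
  qed
qed (auto simp: idx_seqs_def)

lemma sum_idx_seqs_Suc:
  "(\<Sum>is\<in>idx_seqs k (Suc m). F is) = (\<Sum>xs\<in>idx_seqs k m. \<Sum>i<k. F (xs @ [i]))"
proof -
  have "inj_on (\<lambda>(xs, i). xs @ [i]) (idx_seqs k m \<times> {..<k})"
    by (auto simp: inj_on_def)
  then have "(\<Sum>is\<in>idx_seqs k (Suc m). F is) = (\<Sum>(xs, i)\<in>idx_seqs k m \<times> {..<k}. F (xs @ [i]))"
    unfolding idx_seqs_Suc by (subst sum.reindex) (auto simp: case_prod_beta)
  then show ?thesis
    by (simp add: sum.cartesian_product)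
qed

lemma sum_idx_seqs_nth_take:
  fixes h :: "nat list \<Rightarrow> nat \<Rightarrow> 'b::comm_semiring_1"
  assumes "j < m"
  shows "of_nat k * (\<Sum>is\<in>idx_seqs k m. h (take j is) (is ! j))
    = (\<Sum>is\<in>idx_seqs k m. \<Sum>i<k. h (take j is) i)"
  using assms
proof (induction m)
  case 0
  then show ?case by simp
next
  case (Suc m)
  show ?case
  proof (cases "j < m")
    case True
    have prefix: "take j (xs @ [i]) = take j xs" "(xs @ [i]) ! j = xs ! j"
      if "xs \<in> idx_seqs k m" for xs i
      using that True by (auto simp: idx_seqs_def nth_append)
    have "(\<Sum>is\<in>idx_seqs k (Suc m). h (take j is) (is ! j))
        = (\<Sum>xs\<in>idx_seqs k m. of_nat k * h (take j xs) (xs ! j))"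
      unfolding sum_idx_seqs_Suc by (rule sum.cong[OF refl]) (simp only: prefix, simp)
    then have "of_nat k * (\<Sum>is\<in>idx_seqs k (Suc m). h (take j is) (is ! j))
        = of_nat k * (of_nat k * (\<Sum>xs\<in>idx_seqs k m. h (take j xs) (xs ! j)))"
      by (simp add: sum_distrib_left)
    also have "\<dots> = of_nat k * (\<Sum>xs\<in>idx_seqs k m. \<Sum>i<k. h (take j xs) i)"
      using Suc.IH True by simp
    also have "\<dots> = (\<Sum>xs\<in>idx_seqs k m. of_nat k * (\<Sum>i<k. h (take j xs) i))"
      by (simp add: sum_distrib_left)
    also have "\<dots> = (\<Sum>is\<in>idx_seqs k (Suc m). \<Sum>i<k. h (take j is) i)"
      unfolding sum_idx_seqs_Suc by (rule sum.cong[OF refl]) (simp only: prefix, simp)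
    finally show ?thesis .
  next
    case False
    then have last: "take j (xs @ [i]) = xs" "(xs @ [i]) ! j = i"
      if "xs \<in> idx_seqs k m" for xs i
      using that Suc.prems by (auto simp: idx_seqs_def nth_append)
    show ?thesis
      unfolding sum_idx_seqs_Suc sum_distrib_left
      by (rule sum.cong[OF refl]) (simp only: last, simp add: sum_distrib_left)
  qed
qed

lemma idx_avg_nth_take:
  assumes "0 < k" and "j < m"
  shows "idx_avg k m (\<lambda>is. h (take j is) (is ! j))
    = idx_avg k m (\<lambda>is. (\<Sum>i<k. h (take j is) i) / real k)"
  using sum_idx_seqs_nth_take[OF \<open>j < m\<close>, of k h] \<open>0 < k\<close>
  by (simp add: idx_avg_def card_idx_seqs sum_divide_distrib[symmetric] field_simps)

lemma idx_avg_sum: "idx_avg k m (\<lambda>is. \<Sum>j\<in>J. F j is) = (\<Sum>j\<in>J. idx_avg k m (F j))"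
  by (simp add: idx_avg_def sum.swap[of _ J] sum_divide_distrib)

lemma idx_avg_diff: "idx_avg k m (\<lambda>is. F is - G is) = idx_avg k m F - idx_avg k m G"
  by (simp add: idx_avg_def sum_subtractf diff_divide_distrib)

lemma idx_avg_const: "0 < k \<Longrightarrow> idx_avg k m (\<lambda>_. c) = c"
  by (simp add: idx_avg_def card_idx_seqs)

lemma idx_avg_mono:
  "(\<And>is. is \<in> idx_seqs k m \<Longrightarrow> F is \<le> G is) \<Longrightarrow> idx_avg k m F \<le> idx_avg k m G"
  unfolding idx_avg_def by (intro divide_right_mono sum_mono) auto

lemma idx_avg_INF_le:
  assumes "X \<noteq> {}" and "\<And>is. is \<in> idx_seqs k m \<Longrightarrow> bdd_below (F is ` X)"
  shows "idx_avg k m (\<lambda>is. INF x\<in>X. F is x) \<le> (INF x\<in>X. idx_avg k m (\<lambda>is. F is x))"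
  using assms by (intro cINF_greatest idx_avg_mono cINF_lower) auto

lemma idx_avg_sum_fbar:
  assumes "0 < k"
  shows "idx_avg k m (\<lambda>is. \<Sum>j<m. f j (is ! j) (g j (take j is)))
    = idx_avg k m (\<lambda>is. \<Sum>j<m. fbar k f j (g j (take j is)))"
  using idx_avg_nth_take[OF assms, of j m "\<lambda>p i. f j i (g j p)" for j]
  by (simp add: idx_avg_sum fbar_def)

lemma integrable_idx_avg:
  "(\<And>is. is \<in> idx_seqs k m \<Longrightarrow> integrable M (G is))
    \<Longrightarrow> integrable M (\<lambda>r. idx_avg k m (\<lambda>is. G is r))"
  unfolding idx_avg_def by (intro integrable_divide integrable_sum) auto

theorem lemma4p2:
  fixes Xbar :: "'a set" and T k :: nat and n R :: real
    and f :: "nat \<Rightarrow> nat \<Rightarrow> 'a \<Rightarrow> real"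
    and M :: "'r measure"
    and s :: "nat \<Rightarrow> nat list \<Rightarrow> 'r \<Rightarrow> 'a"
  assumes "Xbar \<noteq> {}"
    and "0 < k" and "k dvd T" and "0 < T"
    and "\<And>j i x. j < T div k \<Longrightarrow> i < k \<Longrightarrow> x \<in> Xbar \<Longrightarrow> 0 \<le> f j i x \<and> f j i x \<le> n"
    and "prob_space M"
    and "\<And>j h r. j < T div k \<Longrightarrow> s j h r \<in> Xbar"
    and "\<And>j i h. j < T div k \<Longrightarrow> i < k \<Longrightarrow> (\<lambda>r. f j i (s j h r)) \<in> borel_measurable M"
    and random_regret:
      "(1 / real T) * (\<integral>r. idx_avg k (T div k)
          (\<lambda>is. (\<Sum>j<T div k. f j (is ! j) (s j (take j is) r))
                - (INF x\<in>Xbar. \<Sum>j<T div k. f j (is ! j) x)) \<partial>M) \<le> R"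
  shows "(1 / real T) * ((\<integral>r. idx_avg k (T div k)
            (\<lambda>is. \<Sum>j<T div k. fbar k f j (s j (take j is) r)) \<partial>M)
          - (INF x\<in>Xbar. \<Sum>j<T div k. fbar k f j x))
         \<le> R + n / sqrt (real k * real T)"
proof -
  interpret prob_space M by fact
  let ?m = "T div k"
  define cost where "cost r = idx_avg k ?m (\<lambda>is. \<Sum>j<?m. f j (is ! j) (s j (take j is) r))" for r
  define best where "best = idx_avg k ?m (\<lambda>is. INF x\<in>Xbar. \<Sum>j<?m. f j (is ! j) x)"
  have f_bounds: "0 \<le> f j (is ! j) x" "f j (is ! j) x \<le> n"
    if "is \<in> idx_seqs k ?m" "j < ?m" "x \<in> Xbar" for "is" j x
    using assms(5) nth_idx_seqs_less[OF that(1,2)] that(2,3) by auto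
  have "integrable M (\<lambda>r. f j (is ! j) (s j (take j is) r))"
    if "is \<in> idx_seqs k ?m" "j < ?m" for "is" j
    using assms(7,8) nth_idx_seqs_less[OF that] f_bounds[OF that] that
    by (intro integrable_const_bound[where B = n]) auto
  then have "integrable M cost"
    unfolding cost_def by (intro integrable_idx_avg integrable_sum) auto
  then have "(\<integral>r. cost r - best \<partial>M) = (\<integral>r. cost r \<partial>M) - best"
    by (simp add: prob_space)
  then have regret: "(1 / real T) * ((\<integral>r. cost r \<partial>M) - best) \<le> R"
    using random_regret unfolding idx_avg_diff cost_def[symmetric] best_def[symmetric] by simp
  have "best \<le> (INF x\<in>Xbar. idx_avg k ?m (\<lambda>is. \<Sum>j<?m. f j (is ! j) x))"
    unfolding best_def using f_bounds
    by (intro idx_avg_INF_le[OF assms(1)] bdd_belowI[of _ 0]) (auto intro!: sum_nonneg)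
  also have "\<dots> = (INF x\<in>Xbar. \<Sum>j<?m. fbar k f j x)"
    using idx_avg_sum_fbar[OF assms(2), of ?m f "\<lambda>_ _. x" for x]
    by (simp add: idx_avg_const[OF assms(2)])
  finally have best_le: "best \<le> (INF x\<in>Xbar. \<Sum>j<?m. fbar k f j x)" .
  have cost_fbar: "cost r = idx_avg k ?m (\<lambda>is. \<Sum>j<?m. fbar k f j (s j (take j is) r))" for r
    unfolding cost_def by (rule idx_avg_sum_fbar[OF assms(2)])
  have "0 \<le> n"
  proof -
    obtain x where "x \<in> Xbar"
      using assms(1) by blast
    moreover have "0 < ?m"
      using assms(2-4) by (auto elim!: dvdE)
    ultimately show ?thesis
      using assms(2,5) by fastforce
  qed
  have "(1 / real T) * ((\<integral>r. idx_avg k ?m (\<lambda>is. \<Sum>j<?m. fbar k f j (s j (take j is) r)) \<partial>M)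
        - (INF x\<in>Xbar. \<Sum>j<?m. fbar k f j x))
      \<le> (1 / real T) * ((\<integral>r. cost r \<partial>M) - best)"
    using best_le by (simp add: cost_fbar divide_right_mono)
  also have "\<dots> \<le> R"
    by (rule regret)
  also have "\<dots> \<le> R + n / sqrt (real k * real T)"
    using \<open>0 \<le> n\<close> by simp
  finally show ?thesis .
qed

end
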